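(* In the setting below, for every bounded continuous test function $\alpha:\mathbb{R}^d\times\mathbb{R}^s\to\mathbb{R}$, as $n\to\infty$, \[ \iint\alpha(x,y)\,q(y,y')\frac{y-y'}{1+\|y-y'\|^2}\,d\mu_n(x,y)\,d\mu_n(x',y')=\iint\alpha(x,y)\,q(y,y')\frac{y-y'}{1+\|y-y'\|^2}\,d\mu(x,y)\,d\mu(x',y')+o(1). \]
   Context: Setting: $d,s\ge2$, $\rho\in(0,1)$; $\mu_X$ is a Borel probability measure on $\mathbb{R}^d$ which either has compact support and a $C^1$ density or has sub-Gaussian tails; $X_1,X_2,\dots$ are i.i.d. with law $\mu_X$; $Y^*=(Y_1,\dots,Y_n)$ is the t-SNE output (minimizer of $L_{n,\rho}(X,\cdot)$, where for $X_1,\dots,X_n$ one picks $\sigma_i>0$ with $-\sum_{j\neq i}p_{j|i}\log p_{j|i}=\log(n\rho)$, $p_{j|i}=e^{-\|X_i-X_j\|^2/2\sigma_i^2}/\sum_{k\neq i}e^{-\|X_i-X_k\|^2/2\sigma_i^2}$, $p_{ij}=(p_{i|j}+p_{j|i})/(2n)$, $q_{ij}=(1+\|Y_i-Y_j\|^2)^{-1}/\sum_{k\neq\ell}(1+\|Y_k-Y_\ell\|^2)^{-1}$, $L_{n,\rho}=\sum_{i\ne j}p_{ij}\log(p_{ij}/q_{ij})$); $\mu_n=\frac1n\sum_i\delta_{(X_i,Y_i)}$ converges weakly to $\mu$. Here $q(y,y')=(1+\|y-y'\|^2)^{-1}/\iint(1+\|u-u'\|^2)^{-1}d\mu(u)d\mu(u')$,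 the normalization taken with respect to the $\mathbb{R}^s$-marginal of the limit $\mu$. *)

theory Defs
  imports "HOL-Probability.Probability"
begin

definition cond_p :: "(nat \<Rightarrow> real^'d) \<Rightarrow> nat \<Rightarrow> (nat \<Rightarrow> real) \<Rightarrow> nat \<Rightarrow> nat \<Rightarrow> real" where
  "cond_p X n \<sigma> i j =
     exp (- (norm (X i - X j))\<^sup>2 / (2 * (\<sigma> i)\<^sup>2)) /
     (\<Sum>k\<in>{..<n} - {i}. exp (- (norm (X i - X k))\<^sup>2 / (2 * (\<sigma> i)\<^sup>2)))"

definition perplexity_calibrated :: "(nat \<Rightarrow> real^'d) \<Rightarrow> nat \<Rightarrow> real \<Rightarrow> (nat \<Rightarrow> real) \<Rightarrow> bool" where
  "perplexity_calibrated X n \<rho> \<sigma> \<longleftrightarrow>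
     (\<forall>i<n. \<sigma> i > 0 \<and>
        - (\<Sum>j\<in>{..<n} - {i}. cond_p X n \<sigma> i j * ln (cond_p X n \<sigma> i j)) = ln (real n * \<rho>))"

definition joint_p :: "(nat \<Rightarrow> real^'d) \<Rightarrow> nat \<Rightarrow> (nat \<Rightarrow> real) \<Rightarrow> nat \<Rightarrow> nat \<Rightarrow> real" where
  "joint_p X n \<sigma> i j = (cond_p X n \<sigma> j i + cond_p X n \<sigma> i j) / (2 * real n)"

definition low_q :: "(nat \<Rightarrow> real^'s) \<Rightarrow> nat \<Rightarrow> nat \<Rightarrow> nat \<Rightarrow> real" where
  "low_q Y n i j =
     (1 / (1 + (norm (Y i - Y j))\<^sup>2)) /
     (\<Sum>k<n. \<Sum>l\<in>{..<n} - {k}. 1 / (1 + (norm (Y k - Y l))\<^sup>2))"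

definition tsne_loss :: "(nat \<Rightarrow> real^'d) \<Rightarrow> nat \<Rightarrow> (nat \<Rightarrow> real) \<Rightarrow> (nat \<Rightarrow> real^'s) \<Rightarrow> real" where
  "tsne_loss X n \<sigma> Y =
     (\<Sum>i<n. \<Sum>j\<in>{..<n} - {i}. joint_p X n \<sigma> i j * ln (joint_p X n \<sigma> i j / low_q Y n i j))"

definition tsne_output :: "(nat \<Rightarrow> real^'d) \<Rightarrow> nat \<Rightarrow> real \<Rightarrow> (nat \<Rightarrow> real) \<Rightarrow> (nat \<Rightarrow> real^'s) \<Rightarrow> bool" where
  "tsne_output X n \<rho> \<sigma> Y \<longleftrightarrow>
     perplexity_calibrated X n \<rho> \<sigma> \<and> (\<forall>Y' :: nat \<Rightarrow> real^'s. tsne_loss X n \<sigma> Y \<le> tsne_loss X n \<sigma> Y')"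

definition admissible_input_law :: "(real^'d) measure \<Rightarrow> bool" where
  "admissible_input_law \<mu>X \<longleftrightarrow>
     (\<exists>f grad K. (\<forall>x. 0 \<le> f x) \<and> \<mu>X = density lborel (\<lambda>x. ennreal (f x)) \<and>
        (\<forall>x. (f has_derivative (\<lambda>h. grad x \<bullet> h)) (at x)) \<and> continuous_on UNIV grad \<and>
        compact K \<and> (AE x in \<mu>X. x \<in> K))
   \<or> (\<exists>C c. c > 0 \<and> (\<forall>t\<ge>0. measure \<mu>X {x. norm x > t} \<le> C * exp (- c * t\<^sup>2)))"

definition empirical_weak_conv :: "(nat \<Rightarrow> nat \<Rightarrow> 'a::metric_space) \<Rightarrow> 'a measure \<Rightarrow> bool" where
  "empirical_weak_conv Z \<mu> \<longleftrightarrow>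
     (\<forall>f :: 'a \<Rightarrow> real. continuous_on UNIV f \<and> bounded (range f) \<longrightarrow>
        (\<lambda>n. (\<Sum>i<n. f (Z n i)) / real n) \<longlonglongrightarrow> (\<integral>z. f z \<partial>\<mu>))"

definition q_lim :: "((real^'d) \<times> (real^'s)) measure \<Rightarrow> real^'s \<Rightarrow> real^'s \<Rightarrow> real" where
  "q_lim \<mu> y y' =
     (1 / (1 + (norm (y - y'))\<^sup>2)) /
     (\<integral>z. (\<integral>z'. 1 / (1 + (norm (snd z - snd z'))\<^sup>2) \<partial>\<mu>) \<partial>\<mu>)"

definition force_kernel :: "((real^'d) \<times> (real^'s)) measure \<Rightarrow> real^'s \<Rightarrow> real^'s \<Rightarrow> real^'s" where
  "force_kernel \<mu> y y' = (q_lim \<mu> y y' / (1 + (norm (y - y'))\<^sup>2)) *\<^sub>R (y - y')"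

end

theory Submission
  imports Defs
begin

text \<open>
  Write k for the force kernel, H_n y = (1/n) \<Sum>_j k y Y_j and H y = \<integral> k y y' d\<mu>(x', y'),
  so that the double average is (1/n) \<Sum>_i \<alpha>(X_i, Y_i) H_n Y_i. Up to the normalising
  constant of q, k y y' is v / (1 + |v|^2)^2 at v = y - y', which is bounded and uniformly
  continuous. Hence the H_n are uniformly bounded and uniformly equicontinuous, and since they
  converge pointwise to H by weak convergence, they converge uniformly on compact sets. Weak
  convergence also makes the empirical measures tight, so replacing H_n by H changes the double
  average by o(1); finally (1/n) \<Sum>_i \<alpha>(X_i, Y_i) H Y_i tends to \<integral> \<alpha> H d\<mu> because \<alpha> H
  is bounded and continuous.
\<close>

section \<open>Uniform convergence and uniform continuity\<close>

lemma uniform_limit_equicontinuous_compact: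
  fixes F :: "nat \<Rightarrow> 'a::metric_space \<Rightarrow> 'b::metric_space"
  assumes K: "compact K"
    and lim: "\<And>x. x \<in> K \<Longrightarrow> (\<lambda>n. F n x) \<longlonglongrightarrow> f x"
    and equi: "\<And>e. e > 0 \<Longrightarrow> \<exists>d>0. \<forall>n. \<forall>x\<in>K. \<forall>y\<in>K. dist x y < d \<longrightarrow> dist (F n x) (F n y) \<le> e"
  shows "uniform_limit K F f sequentially"
proof (rule uniform_limitI)
  fix e :: real
  assume e: "e > 0"
  obtain d where d: "d > 0"
    and Fd: "\<And>n x y. x \<in> K \<Longrightarrow> y \<in> K \<Longrightarrow> dist x y < d \<Longrightarrow> dist (F n x) (F n y) \<le> e / 4"
    using equi[of "e / 4"] e by auto
  have fd: "dist (f x) (f y) \<le> e / 4" if "x \<in> K" "y \<in> K" "dist x y < d" for x y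
    using tendsto_dist[OF lim[OF that(1)] lim[OF that(2)]] Fd[OF that]
    by (intro tendsto_upperbound) auto
  obtain T where T: "T \<subseteq> K" "finite T" and cover: "K \<subseteq> (\<Union>t\<in>T. ball t d)"
    using compactE_image[OF K, of K "\<lambda>t. ball t d"] d by force
  have "\<forall>\<^sub>F n in sequentially. \<forall>t\<in>T. dist (F n t) (f t) < e / 4"
    using T e by (intro eventually_ball_finite ballI tendstoD[OF lim]) auto
  then show "\<forall>\<^sub>F n in sequentially. \<forall>x\<in>K. dist (F n x) (f x) < e"
  proof eventually_elim
    case (elim n)
    show ?case
    proof
      fix x
      assume x: "x \<in> K"
      then obtain t where t: "t \<in> T" "dist t x < d"
        using cover by auto
      have "dist (F n x) (f x) \<le> dist (F n x) (F n t) + dist (F n t) (f t) + dist (f t) (f x)"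
        using dist_triangle[of "F n x" "f x" "F n t"] dist_triangle[of "F n t" "f x" "f t"] by linarith
      also have "\<dots> < e"
      proof -
        have "t \<in> K" "dist x t < d"
          using T(1) t by (auto simp: dist_commute)
        then have "dist (F n x) (F n t) \<le> e / 4" "dist (F n t) (f t) < e / 4" "dist (f t) (f x) \<le> e / 4"
          using Fd[OF x] fd[of t x] elim t x by auto
        then show ?thesis
          using e by linarith
      qed
      finally show "dist (F n x) (f x) < e" .
    qed
  qed
qed

lemma uniformly_continuous_on_vanishing_at_infinity:
  fixes h :: "'a::{real_normed_vector, heine_borel} \<Rightarrow> 'b::real_normed_vector"
  assumes ch: "continuous_on UNIV h" and lim: "(h \<longlongrightarrow> 0) at_infinity"
  shows "uniformly_continuous_on UNIV h"
  unfolding uniformly_continuous_on_def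
proof (intro allI impI)
  fix e :: real
  assume e: "e > 0"
  obtain R where small: "\<And>v. R \<le> norm v \<Longrightarrow> norm (h v) < e / 2"
    using tendstoD[OF lim, of "e / 2"] e by (auto simp: eventually_at_infinity)
  have "uniformly_continuous_on (cball 0 (\<bar>R\<bar> + 1)) h"
    by (rule compact_uniformly_continuous[OF continuous_on_subset[OF ch]]) auto
  then obtain d where d: "d > 0"
    and hd: "\<And>x x'. x \<in> cball 0 (\<bar>R\<bar> + 1) \<Longrightarrow> x' \<in> cball 0 (\<bar>R\<bar> + 1) \<Longrightarrow> dist x' x < d \<Longrightarrow> dist (h x') (h x) < e"
    unfolding uniformly_continuous_on_def using e by metis
  have "dist (h x') (h x) < e" if dx: "dist x' x < min d 1" for x x'
  proof (cases "norm x \<le> \<bar>R\<bar> + 1 \<and> norm x' \<le> \<bar>R\<bar> + 1")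
    case True
    then show ?thesis
      using hd[of x x'] dx by simp
  next
    case False
    moreover have "\<bar>norm x' - norm x\<bar> < 1"
      using norm_triangle_ineq3[of x' x] dx by (simp add: dist_norm)
    ultimately have "R \<le> norm x" "R \<le> norm x'"
      by (auto simp: abs_less_iff)
    then show ?thesis
      using small[of x] small[of x'] norm_triangle_ineq4[of "h x'" "h x"] by (simp add: dist_norm)
  qed
  then show "\<exists>d>0. \<forall>x\<in>UNIV. \<forall>x'\<in>UNIV. dist x' x < d \<longrightarrow> dist (h x') (h x) < e"
    using d by (intro exI[of _ "min d 1"]) auto
qed

lemma (in prob_space) norm_integral_le_const:
  fixes f :: "'a \<Rightarrow> 'b::{banach, second_countable_topology}"
  assumes "integrable M f" and "\<And>x. x \<in> space M \<Longrightarrow> norm (f x) \<le> B"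
  shows "norm (\<integral>x. f x \<partial>M) \<le> B"
proof -
  have "(\<integral>x. norm (f x) \<partial>M) \<le> B"
    using assms by (intro integral_le_const) auto
  then show ?thesis
    using integral_norm_bound[of M f] by linarith
qed

lemma (in prob_space) dist_integral_le:
  fixes f g :: "'a \<Rightarrow> 'b::{banach, second_countable_topology}"
  assumes "integrable M f" and "integrable M g" and "\<And>x. x \<in> space M \<Longrightarrow> dist (f x) (g x) \<le> e"
  shows "dist (\<integral>x. f x \<partial>M) (\<integral>x. g x \<partial>M) \<le> e"
  using assms norm_integral_le_const[of "\<lambda>x. f x - g x" e]
  by (simp add: dist_norm)

lemma norm_average_le:
  fixes v :: "nat \<Rightarrow> 'a::real_normed_vector"
  assumes "\<And>j. j < n \<Longrightarrow> norm (v j) \<le> e" and "0 \<le> e"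
  shows "norm ((1 / real n) *\<^sub>R (\<Sum>j<n. v j)) \<le> e"
proof (cases "n = 0")
  case False
  have "norm (\<Sum>j<n. v j) \<le> real n * e"
    using assms(1) sum_norm_le[of "{..<n}" v "\<lambda>_. e"] by simp
  with False show ?thesis
    by (simp add: field_simps)
qed (use assms in simp)

lemma borel_measurable_continuous_on_sets_borel:
  assumes "sets \<mu> = sets borel" and "continuous_on UNIV f"
  shows "f \<in> borel_measurable \<mu>"
  using borel_measurable_continuous_onI[OF assms(2)] measurable_cong_sets[OF assms(1) refl] by blast

lemma integrable_bounded_continuous:
  fixes f :: "'a::topological_space \<Rightarrow> 'b::{banach, second_countable_topology}"
  assumes "finite_measure \<mu>" and "sets \<mu> = sets borel"
    and "continuous_on UNIV f" and "\<And>x. norm (f x) \<le> B"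
  shows "integrable \<mu> f"
  using assms
  by (intro finite_measure.integrable_const_bound[of \<mu> f B] borel_measurable_continuous_on_sets_borel) auto

section \<open>Weak convergence of empirical measures\<close>

lemma empirical_weak_convD:
  fixes f :: "'a::metric_space \<Rightarrow> real"
  assumes "empirical_weak_conv Z \<mu>" and "continuous_on UNIV f" and "\<And>z. \<bar>f z\<bar> \<le> B"
  shows "(\<lambda>n. (\<Sum>i<n. f (Z n i)) / real n) \<longlonglongrightarrow> (\<integral>z. f z \<partial>\<mu>)"
proof -
  have "bounded (range f)"
    using assms(3) by (intro boundedI) auto
  then show ?thesis
    using assms(1,2) unfolding empirical_weak_conv_def by blast
qed

lemma empirical_weak_conv_vector:
  fixes Z :: "nat \<Rightarrow> nat \<Rightarrow> 'a::metric_space" and f :: "'a \<Rightarrow> real^'k"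
  assumes W: "empirical_weak_conv Z \<mu>" and P: "prob_space \<mu>" and S: "sets \<mu> = sets borel"
    and c: "continuous_on UNIV f" and b: "\<And>x. norm (f x) \<le> B"
  shows "(\<lambda>n. (1 / real n) *\<^sub>R (\<Sum>i<n. f (Z n i))) \<longlonglongrightarrow> (\<integral>z. f z \<partial>\<mu>)"
proof (rule vec_tendstoI)
  fix k
  have "\<bar>f z $ k\<bar> \<le> B" for z
    using b[of z] component_le_norm_cart[of "f z" k] by simp
  then have "(\<lambda>n. (\<Sum>i<n. f (Z n i) $ k) / real n) \<longlonglongrightarrow> (\<integral>z. f z $ k \<partial>\<mu>)"
    by (rule empirical_weak_convD[OF W continuous_on_component[OF c]])
  moreover have "(\<integral>z. f z $ k \<partial>\<mu>) = (\<integral>z. f z \<partial>\<mu>) $ k"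
    by (intro integral_bounded_linear bounded_linear_vec_nth
        integrable_bounded_continuous[OF prob_space.finite_measure[OF P] S c b])
  ultimately show "((\<lambda>n. ((1 / real n) *\<^sub>R (\<Sum>i<n. f (Z n i))) $ k) \<longlongrightarrow> (\<integral>z. f z \<partial>\<mu>) $ k) sequentially"
    by simp
qed

definition ramp_above :: "real \<Rightarrow> real \<Rightarrow> real" where
  "ramp_above R t = min 1 (max 0 (t - R))"

lemma continuous_on_ramp_above [continuous_intros]:
  "continuous_on S f \<Longrightarrow> continuous_on S (\<lambda>x. ramp_above R (f x))"
  unfolding ramp_above_def by (intro continuous_intros)

lemma ramp_above_bounds: "0 \<le> ramp_above R t" "ramp_above R t \<le> 1"
  by (simp_all add: ramp_above_def)

lemma integral_ramp_above_tendsto_zero: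
  assumes P: "prob_space \<mu>" and S: "sets \<mu> = sets borel" and c: "continuous_on UNIV \<phi>"
  shows "(\<lambda>m. \<integral>z. ramp_above (real m) (\<phi> z) \<partial>\<mu>) \<longlonglongrightarrow> 0"
proof -
  have "(\<lambda>m. \<integral>z. ramp_above (real m) (\<phi> z) \<partial>\<mu>) \<longlonglongrightarrow> (\<integral>z. 0 \<partial>\<mu>)"
  proof (rule integral_dominated_convergence[where w="\<lambda>_. 1"])
    show "AE z in \<mu>. (\<lambda>m. ramp_above (real m) (\<phi> z)) \<longlonglongrightarrow> 0"
    proof (rule AE_I2, rule tendsto_eventually)
      fix z
      obtain N where "\<phi> z \<le> real N"
        using real_arch_simple by blast
      then show "\<forall>\<^sub>F m in sequentially. ramp_above (real m) (\<phi> z) = 0"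
        unfolding eventually_sequentially ramp_above_def by (intro exI[of _ N]) auto
    qed
  qed (use prob_space.finite_measure[OF P] S c ramp_above_bounds
      in \<open>auto intro!: integrable_bounded_continuous borel_measurable_continuous_on_sets_borel continuous_intros\<close>)
  then show ?thesis
    by simp
qed

lemma empirical_weak_conv_tight:
  fixes Z :: "nat \<Rightarrow> nat \<Rightarrow> 'a::metric_space" and \<phi> :: "'a \<Rightarrow> real"
  assumes W: "empirical_weak_conv Z \<mu>" and P: "prob_space \<mu>" and S: "sets \<mu> = sets borel"
    and c: "continuous_on UNIV \<phi>" and e: "e > 0"
  obtains R where "\<forall>\<^sub>F n in sequentially. real (card {i\<in>{..<n}. R < \<phi> (Z n i)}) \<le> e * real n"
proof -
  obtain m where m: "(\<integral>z. ramp_above (real m) (\<phi> z) \<partial>\<mu>) < e"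
    using order_tendstoD(2)[OF integral_ramp_above_tendsto_zero[OF P S c] e]
    by (meson eventually_sequentially le_refl)
  have "(\<lambda>n. (\<Sum>i<n. ramp_above (real m) (\<phi> (Z n i))) / real n) \<longlonglongrightarrow> (\<integral>z. ramp_above (real m) (\<phi> z) \<partial>\<mu>)"
    using W c ramp_above_bounds by (intro empirical_weak_convD) (auto intro: continuous_intros)
  then have ev: "\<forall>\<^sub>F n in sequentially. (\<Sum>i<n. ramp_above (real m) (\<phi> (Z n i))) / real n < e"
    using m by (rule order_tendstoD(2))
  show ?thesis
  proof (rule that[of "real m + 1"], rule eventually_mono[OF ev])
    fix n
    assume avg: "(\<Sum>i<n. ramp_above (real m) (\<phi> (Z n i))) / real n < e"
    let ?far = "{i\<in>{..<n}. real m + 1 < \<phi> (Z n i)}"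
    have "real (card ?far) = (\<Sum>i\<in>?far. ramp_above (real m) (\<phi> (Z n i)))"
      unfolding ramp_above_def by simp
    also have "\<dots> \<le> (\<Sum>i<n. ramp_above (real m) (\<phi> (Z n i)))"
      by (rule sum_mono2) (auto simp: ramp_above_bounds)
    also have "\<dots> \<le> e * real n"
      using avg by (cases "n = 0") (auto simp: divide_less_eq less_imp_le)
    finally show "real (card ?far) \<le> e * real n" .
  qed
qed

lemma empirical_average_tendsto_zero:
  fixes Z :: "nat \<Rightarrow> nat \<Rightarrow> 'a::metric_space" and \<phi> :: "'a \<Rightarrow> real"
    and g :: "nat \<Rightarrow> 'a \<Rightarrow> 'b::real_normed_vector"
  assumes W: "empirical_weak_conv Z \<mu>" and P: "prob_space \<mu>" and S: "sets \<mu> = sets borel"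
    and c: "continuous_on UNIV \<phi>" and bound: "\<And>n z. norm (g n z) \<le> B"
    and unif: "\<And>R. uniform_limit {z. \<phi> z \<le> R} g (\<lambda>_. 0) sequentially"
  shows "(\<lambda>n. (1 / real n) *\<^sub>R (\<Sum>i<n. g n (Z n i))) \<longlonglongrightarrow> 0"
proof (rule tendstoI)
  fix e :: real
  assume e: "e > 0"
  have B: "B \<ge> 0"
    using bound[of 0 undefined] norm_ge_zero order_trans by blast
  define \<delta> where "\<delta> = e / (2 * (B + 1))"
  have \<delta>: "\<delta> > 0" "B * \<delta> < e / 2"
    using e B by (auto simp: \<delta>_def field_simps)
  obtain R where tight: "\<forall>\<^sub>F n in sequentially. real (card {i\<in>{..<n}. R < \<phi> (Z n i)}) \<le> \<delta> * real n"
    using empirical_weak_conv_tight[OF W P S c \<delta>(1)] .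
  have small: "\<forall>\<^sub>F n in sequentially. \<forall>z\<in>{z. \<phi> z \<le> R}. dist (g n z) 0 < e / 2"
    using e by (intro uniform_limitD[OF unif]) auto
  show "\<forall>\<^sub>F n in sequentially. dist ((1 / real n) *\<^sub>R (\<Sum>i<n. g n (Z n i))) 0 < e"
    using tight small eventually_gt_at_top[of 0]
  proof eventually_elim
    case (elim n)
    have pointwise: "norm (g n z) \<le> e / 2 + (if R < \<phi> z then B else 0)" for z
      using elim(2) bound[of n z] e by (cases "R < \<phi> z") (auto simp: not_less less_imp_le)
    have "norm (\<Sum>i<n. g n (Z n i)) \<le> (\<Sum>i<n. e / 2 + (if R < \<phi> (Z n i) then B else 0))"
      by (intro norm_sum[THEN order_trans] sum_mono pointwise)
    also have "\<dots> = e / 2 * real n + B * real (card {i\<in>{..<n}. R < \<phi> (Z n i)})"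
      by (simp add: sum.distrib sum.inter_filter[symmetric])
    also have "\<dots> \<le> e / 2 * real n + B * (\<delta> * real n)"
      using elim(1) B by (intro add_left_mono mult_left_mono) auto
    also have "\<dots> < e * real n"
    proof -
      have "B * \<delta> * real n < e / 2 * real n"
        using \<delta>(2) elim(3) by (intro mult_strict_right_mono) auto
      then show ?thesis
        by (simp add: algebra_simps)
    qed
    finally show ?case
      using elim(3) by (simp add: divide_simps)
  qed
qed

section \<open>Double averages of equicontinuous kernels\<close>

definition uniformly_equicontinuous_kernel :: "('y::metric_space \<Rightarrow> 'a \<Rightarrow> 'b::metric_space) \<Rightarrow> bool" where
  "uniformly_equicontinuous_kernel k \<longleftrightarrow>
     (\<forall>e>0. \<exists>d>0. \<forall>y y' z. dist y y' < d \<longrightarrow> dist (k y z) (k y' z) \<le> e)"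

lemma uniformly_equicontinuous_kernelD:
  assumes "uniformly_equicontinuous_kernel k" and "e > 0"
  obtains d where "d > 0" and "\<And>y y' z. dist y y' < d \<Longrightarrow> dist (k y z) (k y' z) \<le> e"
  using assms unfolding uniformly_equicontinuous_kernel_def by blast

lemma continuous_on_kernel_integral:
  fixes k :: "'y::metric_space \<Rightarrow> 'a \<Rightarrow> 'b::{banach, second_countable_topology}"
  assumes P: "prob_space \<mu>" and int: "\<And>y. integrable \<mu> (k y)"
    and equi: "uniformly_equicontinuous_kernel k"
  shows "continuous_on UNIV (\<lambda>y. \<integral>z. k y z \<partial>\<mu>)"
  unfolding continuous_on_iff
proof (intro ballI allI impI)
  fix y :: 'y and e :: real
  assume "e > 0"
  then obtain d where "d > 0" and d: "\<And>y y' z. dist y y' < d \<Longrightarrow> dist (k y z) (k y' z) \<le> e / 2"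
    using uniformly_equicontinuous_kernelD[OF equi, of "e / 2"] by auto
  have "dist (\<integral>z. k y' z \<partial>\<mu>) (\<integral>z. k y z \<partial>\<mu>) < e" if "dist y' y < d" for y'
    using prob_space.dist_integral_le[OF P int int d[OF that]] \<open>e > 0\<close> by simp
  with \<open>d > 0\<close> show "\<exists>d>0. \<forall>y'\<in>UNIV. dist y' y < d \<longrightarrow> dist (\<integral>z. k y' z \<partial>\<mu>) (\<integral>z. k y z \<partial>\<mu>) < e"
    by blast
qed

lemma empirical_kernel_average_uniform_limit:
  fixes Z :: "nat \<Rightarrow> nat \<Rightarrow> 'a::metric_space" and k :: "'y::metric_space \<Rightarrow> 'a \<Rightarrow> real^'m"
  assumes W: "empirical_weak_conv Z \<mu>" and P: "prob_space \<mu>" and S: "sets \<mu> = sets borel"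
    and ck: "\<And>y. continuous_on UNIV (k y)" and bk: "\<And>y z. norm (k y z) \<le> B"
    and equi: "uniformly_equicontinuous_kernel k" and K: "compact K"
  shows "uniform_limit K (\<lambda>n y. (1 / real n) *\<^sub>R (\<Sum>j<n. k y (Z n j))) (\<lambda>y. \<integral>z. k y z \<partial>\<mu>) sequentially"
proof (rule uniform_limit_equicontinuous_compact[OF K])
  show "(\<lambda>n. (1 / real n) *\<^sub>R (\<Sum>j<n. k y (Z n j))) \<longlonglongrightarrow> (\<integral>z. k y z \<partial>\<mu>)" for y
    by (rule empirical_weak_conv_vector[OF W P S ck bk])
  fix e :: real
  assume "e > 0"
  then obtain d where "d > 0" and d: "\<And>y y' z. dist y y' < d \<Longrightarrow> dist (k y z) (k y' z) \<le> e"
    using uniformly_equicontinuous_kernelD[OF equi] by blast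
  have "dist ((1 / real n) *\<^sub>R (\<Sum>j<n. k y (Z n j))) ((1 / real n) *\<^sub>R (\<Sum>j<n. k y' (Z n j))) \<le> e"
    if "dist y y' < d" for n y y'
    using norm_average_le[of n "\<lambda>j. k y (Z n j) - k y' (Z n j)" e] d[OF that] \<open>e > 0\<close>
    by (simp add: dist_norm scaleR_diff_right sum_subtractf)
  with \<open>d > 0\<close> show "\<exists>d>0. \<forall>n. \<forall>y\<in>K. \<forall>y'\<in>K. dist y y' < d \<longrightarrow>
      dist ((1 / real n) *\<^sub>R (\<Sum>j<n. k y (Z n j))) ((1 / real n) *\<^sub>R (\<Sum>j<n. k y' (Z n j))) \<le> e"
    by blast
qed

lemma double_average_split:
  fixes a :: "nat \<Rightarrow> real" and k :: "nat \<Rightarrow> nat \<Rightarrow> 'a::real_vector" and H :: "nat \<Rightarrow> 'a"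
  shows "(1 / (real n)\<^sup>2) *\<^sub>R (\<Sum>i<n. \<Sum>j<n. a i *\<^sub>R k i j) =
    (1 / real n) *\<^sub>R (\<Sum>i<n. a i *\<^sub>R H i) +
    (1 / real n) *\<^sub>R (\<Sum>i<n. a i *\<^sub>R ((1 / real n) *\<^sub>R (\<Sum>j<n. k i j) - H i))"
  by (simp add: power2_eq_square scaleR_sum_right scaleR_add_right[symmetric]
      sum.distrib[symmetric] algebra_simps)

lemma empirical_double_average_tendsto:
  fixes Z :: "nat \<Rightarrow> nat \<Rightarrow> 'a::{real_normed_vector, heine_borel}"
    and \<alpha> :: "'a \<Rightarrow> real" and k :: "'a \<Rightarrow> 'a \<Rightarrow> real^'m"
  assumes W: "empirical_weak_conv Z \<mu>" and P: "prob_space \<mu>" and S: "sets \<mu> = sets borel"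
    and c\<alpha>: "continuous_on UNIV \<alpha>" and b\<alpha>: "\<And>z. \<bar>\<alpha> z\<bar> \<le> A"
    and ck: "\<And>y. continuous_on UNIV (k y)" and bk: "\<And>y z. norm (k y z) \<le> B"
    and equi: "uniformly_equicontinuous_kernel k"
  shows "(\<lambda>n. (1 / (real n)\<^sup>2) *\<^sub>R (\<Sum>i<n. \<Sum>j<n. \<alpha> (Z n i) *\<^sub>R k (Z n i) (Z n j)))
    \<longlonglongrightarrow> (\<integral>z. (\<integral>z'. \<alpha> z *\<^sub>R k z z' \<partial>\<mu>) \<partial>\<mu>)"
proof -
  define Hn where "Hn n y = (1 / real n) *\<^sub>R (\<Sum>j<n. k y (Z n j))" for n y
  define H where "H y = (\<integral>z. k y z \<partial>\<mu>)" for y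
  have int: "integrable \<mu> (k y)" for y
    using prob_space.finite_measure[OF P] S ck bk by (rule integrable_bounded_continuous)
  have A: "A \<ge> 0" and B: "B \<ge> 0"
    using b\<alpha>[of 0] bk[of 0 0] norm_ge_zero[of "k 0 0"] by linarith+
  have Hb: "norm (H y) \<le> B" for y
    unfolding H_def using prob_space.norm_integral_le_const[OF P int bk] .
  have Hnb: "norm (Hn n y) \<le> B" for n y
    unfolding Hn_def using bk B by (intro norm_average_le)
  have main: "(\<lambda>n. (1 / real n) *\<^sub>R (\<Sum>i<n. \<alpha> (Z n i) *\<^sub>R H (Z n i))) \<longlonglongrightarrow> (\<integral>z. \<alpha> z *\<^sub>R H z \<partial>\<mu>)"
    using b\<alpha> Hb A B continuous_on_kernel_integral[OF P int equi] unfolding H_def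
    by (intro empirical_weak_conv_vector[OF W P S, where B = "A * B"] continuous_intros c\<alpha>)
      (auto intro: mult_mono)
  have error: "(\<lambda>n. (1 / real n) *\<^sub>R (\<Sum>i<n. \<alpha> (Z n i) *\<^sub>R (Hn n (Z n i) - H (Z n i)))) \<longlonglongrightarrow> 0"
  proof (rule empirical_average_tendsto_zero[OF W P S continuous_on_norm_id])
    show "norm (\<alpha> z *\<^sub>R (Hn n z - H z)) \<le> A * (B + B)" for n z
      using b\<alpha>[of z] norm_triangle_ineq4[of "Hn n z" "H z"] Hb[of z] Hnb[of n z] A
      by (auto intro!: mult_mono)
    fix R :: real
    have "uniform_limit (cball (0::'a) R) Hn H sequentially"
      unfolding Hn_def H_def using W P S ck bk equi compact_cball by (rule empirical_kernel_average_uniform_limit)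
    then have "uniform_limit (cball 0 R) (\<lambda>n z. \<alpha> z *\<^sub>R (Hn n z - H z)) (\<lambda>z. \<alpha> z *\<^sub>R (H z - H z)) sequentially"
      using b\<alpha> by (intro uniform_limit_intros boundedI[of "\<alpha> ` _" A]) (auto simp: image_constant_conv)
    then show "uniform_limit {z. norm z \<le> R} (\<lambda>n z. \<alpha> z *\<^sub>R (Hn n z - H z)) (\<lambda>_. 0) sequentially"
      by (simp add: cball_def dist_norm)
  qed
  have "(1 / (real n)\<^sup>2) *\<^sub>R (\<Sum>i<n. \<Sum>j<n. \<alpha> (Z n i) *\<^sub>R k (Z n i) (Z n j)) =
      (1 / real n) *\<^sub>R (\<Sum>i<n. \<alpha> (Z n i) *\<^sub>R H (Z n i)) +
      (1 / real n) *\<^sub>R (\<Sum>i<n. \<alpha> (Z n i) *\<^sub>R (Hn n (Z n i) - H (Z n i)))" for n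
    unfolding Hn_def by (rule double_average_split)
  moreover have "(\<integral>z. (\<integral>z'. \<alpha> z *\<^sub>R k z z' \<partial>\<mu>) \<partial>\<mu>) = (\<integral>z. \<alpha> z *\<^sub>R H z \<partial>\<mu>)"
    by (simp add: H_def)
  ultimately show ?thesis
    using tendsto_add[OF main error] by simp
qed

lemma uniformly_equicontinuous_difference_kernel:
  fixes h :: "'b::real_normed_vector \<Rightarrow> 'c::metric_space"
  assumes "uniformly_continuous_on UNIV h"
  shows "uniformly_equicontinuous_kernel (\<lambda>(z :: 'a::metric_space \<times> 'b) (z' :: 'a \<times> 'b). h (snd z - snd z'))"
  unfolding uniformly_equicontinuous_kernel_def
proof (intro allI impI)
  fix e :: real
  assume "e > 0"
  then obtain d where "d > 0" and d: "\<And>u v. dist u v < d \<Longrightarrow> dist (h u) (h v) < e"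
    using assms unfolding uniformly_continuous_on_def by (metis UNIV_I)
  show "\<exists>d>0. \<forall>(z :: 'a \<times> 'b) (w :: 'a \<times> 'b) (z' :: 'a \<times> 'b).
      dist z w < d \<longrightarrow> dist (h (snd z - snd z')) (h (snd w - snd z')) \<le> e"
  proof (intro exI[of _ d] conjI allI impI)
    fix z w z' :: "'a \<times> 'b"
    assume "dist z w < d"
    have "dist (snd z - snd z') (snd w - snd z') = dist (snd z) (snd w)"
      by (simp add: dist_norm)
    also have "\<dots> \<le> dist z w"
      by (rule dist_snd_le)
    finally have "dist (h (snd z - snd z')) (h (snd w - snd z')) < e"
      using d \<open>dist z w < d\<close> by simp
    then show "dist (h (snd z - snd z')) (h (snd w - snd z')) \<le> e"
      by simp
  qed fact
qed

section \<open>The t-SNE force kernel\<close>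

definition student_t_force :: "'a::real_normed_vector \<Rightarrow> 'a" where
  "student_t_force v = (1 / (1 + (norm v)\<^sup>2)\<^sup>2) *\<^sub>R v"

lemma force_kernel_scaled_student_t_force:
  obtains c where "\<And>y y'. force_kernel \<mu> y y' = c *\<^sub>R student_t_force (y - y')"
proof
  have "1 / (1 + t) / D / (1 + t) = 1 / D * (1 / (1 + t)\<^sup>2)" for t D :: real
    by (simp add: power2_eq_square mult_ac)
  then show "force_kernel \<mu> y y' =
    (1 / (\<integral>z. (\<integral>z'. 1 / (1 + (norm (snd z - snd z'))\<^sup>2) \<partial>\<mu>) \<partial>\<mu>)) *\<^sub>R student_t_force (y - y')" for y y'
    unfolding force_kernel_def q_lim_def student_t_force_def scaleR_scaleR by metis
qed

lemma student_t_force_denominator_pos: "0 < (1 + (norm v)\<^sup>2)\<^sup>2"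
  by (intro zero_less_power add_pos_nonneg) auto

lemma continuous_on_student_t_force: "continuous_on UNIV student_t_force"
  unfolding student_t_force_def
  using student_t_force_denominator_pos by (intro continuous_intros) (auto simp del: zero_less_power2)

lemma norm_student_t_force: "norm (student_t_force v) = norm v / (1 + (norm v)\<^sup>2)\<^sup>2"
  by (simp add: student_t_force_def)

lemma norm_le_one_plus_norm_squared: "norm v \<le> 1 + (norm v)\<^sup>2"
proof -
  have "0 \<le> (norm v - 1)\<^sup>2"
    by simp
  then have "2 * norm v \<le> 1 + (norm v)\<^sup>2"
    by (simp add: power2_eq_square algebra_simps)
  then show ?thesis
    using norm_ge_zero[of v] by linarith
qed

lemma norm_student_t_force_le: "norm (student_t_force v) \<le> 1"
proof -
  have "norm v \<le> 1 + (norm v)\<^sup>2"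
    by (rule norm_le_one_plus_norm_squared)
  also have "\<dots> \<le> (1 + (norm v)\<^sup>2)\<^sup>2"
    by (rule self_le_power) auto
  finally show ?thesis
    using student_t_force_denominator_pos[of v] by (simp add: norm_student_t_force pos_divide_le_eq)
qed

lemma student_t_force_tendsto_zero: "(student_t_force \<longlongrightarrow> (0 :: 'a::real_normed_vector)) at_infinity"
proof (rule tendsto_0_le[OF tendsto_inverse_0_at_top[OF filterlim_norm_at_top], where K = 1])
  show "\<forall>\<^sub>F (v :: 'a) in at_infinity. norm (student_t_force v) \<le> norm (inverse (norm v)) * 1"
    unfolding eventually_at_infinity
  proof (intro exI[of _ 1] allI impI)
    fix v :: 'a
    assume v: "1 \<le> norm v"
    have "(norm v)\<^sup>2 \<le> (1 + (norm v)\<^sup>2)\<^sup>2"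
      by (rule power_mono[OF norm_le_one_plus_norm_squared norm_ge_zero])
    then have "norm v / (1 + (norm v)\<^sup>2)\<^sup>2 \<le> norm v / (norm v)\<^sup>2"
      using v student_t_force_denominator_pos[of v] by (intro divide_left_mono mult_pos_pos) auto
    also have "\<dots> = inverse (norm v)"
      using v by (simp add: power2_eq_square inverse_eq_divide)
    finally show "norm (student_t_force v) \<le> norm (inverse (norm v)) * 1"
      by (simp add: norm_student_t_force)
  qed
qed

theorem lemmaA3:
  fixes M :: "'w measure"
    and Xr :: "nat \<Rightarrow> 'w \<Rightarrow> real^'d"
    and \<mu>X :: "(real^'d) measure"
    and \<omega> :: 'w
    and \<rho> :: real
    and \<sigma> :: "nat \<Rightarrow> nat \<Rightarrow> real"
    and Y :: "nat \<Rightarrow> nat \<Rightarrow> real^'s"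
    and \<mu> :: "((real^'d) \<times> (real^'s)) measure"
    and \<alpha> :: "(real^'d) \<times> (real^'s) \<Rightarrow> real"
  assumes "CARD('d) \<ge> 2" and "CARD('s) \<ge> 2"
    and "0 < \<rho>" and "\<rho> < 1"
    and "prob_space M"
    and "prob_space.indep_vars M (\<lambda>_. borel) Xr UNIV"
    and "\<And>i. distr M borel (Xr i) = \<mu>X"
    and "admissible_input_law \<mu>X"
    and "\<omega> \<in> space M"
    and "\<forall>\<^sub>F n in sequentially. tsne_output (\<lambda>i. Xr i \<omega>) n \<rho> (\<sigma> n) (Y n)"
    and "prob_space \<mu>" and "sets \<mu> = sets borel"
    and "empirical_weak_conv (\<lambda>n i. (Xr i \<omega>, Y n i)) \<mu>"
    and "continuous_on UNIV \<alpha>" and "bounded (range \<alpha>)"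
  shows "(\<lambda>n. (1 / (real n)\<^sup>2) *\<^sub>R
            (\<Sum>i<n. \<Sum>j<n. \<alpha> (Xr i \<omega>, Y n i) *\<^sub>R force_kernel \<mu> (Y n i) (Y n j)))
         \<longlonglongrightarrow> (\<integral>z. (\<integral>z'. \<alpha> z *\<^sub>R force_kernel \<mu> (snd z) (snd z') \<partial>\<mu>) \<partial>\<mu>)"
proof -
  obtain c where kernel: "\<And>y y'. force_kernel \<mu> y y' = c *\<^sub>R student_t_force (y - y')"
    using force_kernel_scaled_student_t_force[of \<mu>] by blast
  obtain A where b\<alpha>: "\<And>z. \<bar>\<alpha> z\<bar> \<le> A"
    using assms(15) unfolding bounded_iff by auto
  have uc: "uniformly_continuous_on UNIV (\<lambda>v::real^'s. c *\<^sub>R student_t_force v)"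
    by (intro uniformly_continuous_on_cmul uniformly_continuous_on_vanishing_at_infinity
        continuous_on_student_t_force student_t_force_tendsto_zero)
  have "(\<lambda>n. (1 / (real n)\<^sup>2) *\<^sub>R (\<Sum>i<n. \<Sum>j<n. \<alpha> (Xr i \<omega>, Y n i) *\<^sub>R
      force_kernel \<mu> (snd (Xr i \<omega>, Y n i)) (snd (Xr j \<omega>, Y n j))))
    \<longlonglongrightarrow> (\<integral>z. (\<integral>z'. \<alpha> z *\<^sub>R force_kernel \<mu> (snd z) (snd z') \<partial>\<mu>) \<partial>\<mu>)"
  proof (rule empirical_double_average_tendsto[OF assms(13,11,12,14) b\<alpha>])
    show "continuous_on UNIV (\<lambda>z'. force_kernel \<mu> (snd z) (snd z'))" for z
      unfolding kernel
      by (intro continuous_intros continuous_on_compose2[OF continuous_on_student_t_force]) auto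
    show "norm (force_kernel \<mu> (snd z) (snd z')) \<le> \<bar>c\<bar>" for z z'
      using mult_left_le[OF norm_student_t_force_le abs_ge_zero] by (simp add: kernel)
    show "uniformly_equicontinuous_kernel
        (\<lambda>(z :: (real^'d) \<times> (real^'s)) (z' :: (real^'d) \<times> (real^'s)). force_kernel \<mu> (snd z) (snd z'))"
      unfolding kernel by (rule uniformly_equicontinuous_difference_kernel[OF uc])
  qed
  then show ?thesis
    by simp
qed

end
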